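(* Let $q\ge8$ be even. For $\mu\in\mathbb{F}_q$ let $\ell_\mu$ be the line through $\mathbf{P}(0,\mu,0,1)$ and $\mathbf{P}(1,0,1,0)$, and let $L_c$ be the line through $\mathbf{P}(1,0,0,1)$ and $\mathbf{P}(0,0,1,0)$. Then for any $\mu',\mu''\in\mathbb{F}_q\setminus\{0,1\}$ with $\mu'\ne\mu''$, the lines $\ell_{\mu'}$ and $\ell_{\mu''}$ lie in different orbits of $G_q$. Moreover, no line $\ell_\mu$ with $\mu\in\mathbb{F}_q\setminus\{0,1\}$ lies in the $G_q$-orbit of $L_c$.
   Context: Points of $\mathrm{PG}(3,q)$ are written $\mathbf{P}(x_0,x_1,x_2,x_3)$ in homogeneous coordinates over the field $\mathbb{F}_q$. The twisted cubic is $\mathscr{C}=\{\mathbf{P}(t^3,t^2,t,1):t\in\mathbb{F}_q\}\cup\{\mathbf{P}(1,0,0,0)\}$ and $G_q$ is the group of projectivities of $\mathrm{PG}(3,q)$ fixing $\mathscr{C}$ (for $q\ge5$, $G_q\cong\mathrm{PGL}(2,q)$). Two lines lie in the same orbit if some element of $G_q$ maps one onto the other. *)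

theory Defs
  imports "HOL-Analysis.Analysis"
begin

text \<open>Projective space PG(3,q) over a finite field 'a: vectors in 'a^4 (coordinates
  x0,x1,x2,x3 are the components 1,2,3,4), a point is the set of nonzero scalar
  multiples of a nonzero vector.\<close>

definition pg_point :: "'a::field ^ 4 \<Rightarrow> ('a ^ 4) set" where
  "pg_point v = {c *s v | c. c \<noteq> 0}"

definition pt4 :: "'a::field \<Rightarrow> 'a \<Rightarrow> 'a \<Rightarrow> 'a \<Rightarrow> ('a ^ 4) set" where
  "pt4 x0 x1 x2 x3 = pg_point (vector [x0, x1, x2, x3])"

definition pg_line :: "'a::field ^ 4 \<Rightarrow> 'a ^ 4 \<Rightarrow> ('a ^ 4) set set" where
  "pg_line u w = {pg_point (a *s u + b *s w) | a b. a *s u + b *s w \<noteq> 0}"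

definition twisted_cubic :: "('a::field ^ 4) set set" where
  "twisted_cubic = {pt4 (t^3) (t^2) t 1 | t. True} \<union> {pt4 1 0 0 0}"

definition proj_map :: "'a::field ^ 4 ^ 4 \<Rightarrow> ('a ^ 4) set \<Rightarrow> ('a ^ 4) set" where
  "proj_map A P = (\<lambda>v. A *v v) ` P"

definition Gq :: "('a::field ^ 4 ^ 4) set" where
  "Gq = {A. invertible A \<and> proj_map A ` (twisted_cubic :: ('a ^ 4) set set) = twisted_cubic}"

definition same_orbit :: "('a::field ^ 4) set set \<Rightarrow> ('a ^ 4) set set \<Rightarrow> bool" where
  "same_orbit L1 L2 \<longleftrightarrow> (\<exists>A \<in> Gq. proj_map A ` L1 = L2)"

definition ell :: "'a::field \<Rightarrow> ('a ^ 4) set set" where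
  "ell \<mu> = pg_line (vector [0, \<mu>, 0, 1]) (vector [1, 0, 1, 0])"

definition Lc :: "('a::field ^ 4) set set" where
  "Lc = pg_line (vector [1, 0, 0, 1]) (vector [0, 0, 1, 0])"

end

theory Submission
  imports Defs "HOL-Computational_Algebra.Polynomial"
begin

(*
  Write z = (z1, z2, z3, z4) as the 2x2 matrix Z = [[z1, z2], [z3, z4]]. The cone over the
  twisted cubic consists of the matrices (x^2, y^2)^T (x, y), and for q >= 7 every element of
  G_q acts, up to a scalar, by the matrix cubic_matrix a b c d induced by some invertible
  M = [[a, b], [c, d]]; this is shown by normalising so that P(1,0,0,0) and P(0,0,0,1) are fixed
  and comparing coefficients of polynomials of degree 6 in the curve parameter.

  In characteristic 2 this action is Z |-> M' Z M^T, where M' squares the entries of M. So the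
  linear forms (u^2, v^2) Z (s, t)^T are permuted among themselves, and on a point of rank one
  they factor as a square times a linear factor. As squaring is onto, mu = r^2, and the lines
  ell mu and Lc are cut out by two such forms. Evaluating at two points of a line gives four
  conditions of the shape "entry of M = 0 or linear relation", and a case analysis using
  det M <> 0 shows that they force mu' = mu'' for the lines ell, and cannot all hold when the
  source line is Lc.
*)

lemma vector_4 [simp]:
  "(vector [x, y, z, w] :: 'a::zero^4) $ 1 = x"
  "(vector [x, y, z, w] :: 'a::zero^4) $ 2 = y"
  "(vector [x, y, z, w] :: 'a::zero^4) $ 3 = z"
  "(vector [x, y, z, w] :: 'a::zero^4) $ 4 = w"
  unfolding vector_def by simp_all

lemma vec_eq_iff_4: "(v :: 'a^4) = w \<longleftrightarrow> v$1 = w$1 \<and> v$2 = w$2 \<and> v$3 = w$3 \<and> v$4 = w$4"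
  by (auto simp: vec_eq_iff forall_4)

lemma matrix_vector_mult_4:
  "(A :: 'a::semiring_1^4^4) *v v =
     vector [A$1$1 * v$1 + A$1$2 * v$2 + A$1$3 * v$3 + A$1$4 * v$4,
             A$2$1 * v$1 + A$2$2 * v$2 + A$2$3 * v$3 + A$2$4 * v$4,
             A$3$1 * v$1 + A$3$2 * v$2 + A$3$3 * v$3 + A$3$4 * v$4,
             A$4$1 * v$1 + A$4$2 * v$2 + A$4$3 * v$3 + A$4$4 * v$4]"
  by (simp add: vec_eq_iff_4 matrix_vector_mult_def sum_4)

lemma pg_point_smult:
  assumes "c \<noteq> 0" shows "pg_point (c *s v) = pg_point (v :: 'a::field^4)"
proof
  show "pg_point (c *s v) \<subseteq> pg_point v"
  proof
    fix z assume "z \<in> pg_point (c *s v)"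
    then obtain d where "d \<noteq> 0" "z = (d * c) *s v"
      unfolding pg_point_def by (auto simp: vector_smult_assoc)
    with assms show "z \<in> pg_point v" unfolding pg_point_def by auto
  qed
  show "pg_point v \<subseteq> pg_point (c *s v)"
  proof
    fix z assume "z \<in> pg_point v"
    then obtain d where "d \<noteq> 0" "z = d *s v" unfolding pg_point_def by auto
    with assms have "z = (d / c) *s (c *s v)" "d / c \<noteq> 0" by (simp_all add: vector_smult_assoc)
    then show "z \<in> pg_point (c *s v)" unfolding pg_point_def by blast
  qed
qed

lemma pg_point_self: "v \<in> pg_point v"
  unfolding pg_point_def by (intro CollectI exI[of _ 1]) simp

lemma pg_point_eq_imp_smult: "pg_point v = pg_point w \<Longrightarrow> \<exists>c. c \<noteq> 0 \<and> w = c *s v"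
  using pg_point_self[of w] unfolding pg_point_def by auto

lemma proj_map_pg_point: "proj_map A (pg_point v) = pg_point (A *v v)"
  unfolding proj_map_def pg_point_def
  by (auto simp: vector_scalar_commute intro!: image_eqI)

lemma pg_point_in_pg_line:
  assumes "u \<noteq> 0" "w \<noteq> 0"
  shows "pg_point u \<in> pg_line u w" "pg_point w \<in> pg_line u w"
proof -
  have "1 *s u + 0 *s w = u" "0 *s u + 1 *s w = w" by (simp_all add: vec_eq_iff)
  with assms show "pg_point u \<in> pg_line u w" "pg_point w \<in> pg_line u w"
    unfolding pg_line_def by (metis (mono_tags, lifting) CollectI)+
qed

section \<open>The twisted cubic and its cone\<close>

definition cubic_vec :: "'a::field \<Rightarrow> 'a \<Rightarrow> 'a^4" where
  "cubic_vec x y = vector [x^3, x^2 * y, x * y^2, y^3]"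

definition on_cubic_cone :: "'a::field^4 \<Rightarrow> bool" where
  "on_cubic_cone v \<longleftrightarrow> (v$2)^2 = v$1 * v$3 \<and> (v$3)^2 = v$2 * v$4 \<and> v$1 * v$4 = v$2 * v$3"

lemma cubic_vec_eq_0_iff [simp]: "cubic_vec x y = 0 \<longleftrightarrow> x = 0 \<and> y = 0"
  by (auto simp: cubic_vec_def vec_eq_iff_4)

lemma on_cubic_cone_iff: "on_cubic_cone v \<longleftrightarrow> (\<exists>k x y. v = k *s cubic_vec x y)"
proof
  assume cone: "on_cubic_cone v"
  show "\<exists>k x y. v = k *s cubic_vec x y"
  proof (cases "v$4 = 0")
    case True
    with cone have "v$3 = 0" by (simp add: on_cubic_cone_def)
    with cone have "v$2 = 0" by (simp add: on_cubic_cone_def)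
    with True \<open>v$3 = 0\<close> have "v = v$1 *s cubic_vec 1 0" by (simp add: vec_eq_iff_4 cubic_vec_def)
    then show ?thesis by blast
  next
    case False
    from cone have 2: "v$2 * v$4 = (v$3)^2" and 1: "v$1 * v$4 = v$2 * v$3"
      by (simp_all add: on_cubic_cone_def)
    have "v$1 * (v$4)^2 = (v$2 * v$4) * v$3"
      by (simp add: power2_eq_square 1 flip: mult.assoc)
    with 2 have "v$1 * (v$4)^2 = (v$3)^3" by (simp add: power2_eq_square power3_eq_cube)
    with 2 False have "v = v$4 *s cubic_vec (v$3 / v$4) 1"
      by (simp add: vec_eq_iff_4 cubic_vec_def field_simps power2_eq_square power3_eq_cube)
    then show ?thesis by blast
  qed
next
  assume "\<exists>k x y. v = k *s cubic_vec x y"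
  then show "on_cubic_cone v"
    by (auto simp: on_cubic_cone_def cubic_vec_def power2_eq_square power3_eq_cube)
qed

lemma twisted_cubic_iff:
  "P \<in> twisted_cubic \<longleftrightarrow> (\<exists>v. v \<noteq> 0 \<and> on_cubic_cone v \<and> P = pg_point v)"
proof
  assume "P \<in> twisted_cubic"
  then obtain x y :: 'a where "P = pg_point (cubic_vec x y)" "cubic_vec x y \<noteq> 0"
  proof (unfold twisted_cubic_def pt4_def, elim UnE CollectE exE conjE singletonE)
    fix t assume "P = pg_point (vector [t^3, t^2, t, 1])"
    then show thesis using that[of t 1] by (simp add: cubic_vec_def vec_eq_iff_4)
  next
    assume "P = pg_point (vector [1, 0, 0, 0])"
    then show thesis using that[of 1 0] by (simp add: cubic_vec_def vec_eq_iff_4)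
  qed
  then show "\<exists>v. v \<noteq> 0 \<and> on_cubic_cone v \<and> P = pg_point v"
    using on_cubic_cone_iff[of "cubic_vec x y"] by (metis vector_smult_lid)
next
  assume "\<exists>v. v \<noteq> 0 \<and> on_cubic_cone v \<and> P = pg_point v"
  then obtain k x y where P: "P = pg_point (k *s cubic_vec x y)" and "k \<noteq> 0" "x \<noteq> 0 \<or> y \<noteq> 0"
    by (auto simp: on_cubic_cone_iff)
  show "P \<in> twisted_cubic"
  proof (cases "y = 0")
    case True
    with \<open>x \<noteq> 0 \<or> y \<noteq> 0\<close> have "k *s cubic_vec x y = (k * x^3) *s vector [1, 0, 0, 0]"
      by (simp add: cubic_vec_def vec_eq_iff_4)
    with True \<open>k \<noteq> 0\<close> \<open>x \<noteq> 0 \<or> y \<noteq> 0\<close> show ?thesis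
      unfolding P twisted_cubic_def pt4_def by (simp add: pg_point_smult)
  next
    case False
    then have "k *s cubic_vec x y = (k * y^3) *s vector [(x/y)^3, (x/y)^2, x/y, 1]"
      by (simp add: cubic_vec_def vec_eq_iff_4 field_simps power2_eq_square power3_eq_cube)
    with False \<open>k \<noteq> 0\<close> show ?thesis
      unfolding P twisted_cubic_def pt4_def by (auto simp: pg_point_smult)
  qed
qed

lemma Gq_preserves_cubic_cone:
  assumes "A \<in> Gq" "on_cubic_cone v" shows "on_cubic_cone (A *v v)"
proof (cases "v = 0")
  case True then show ?thesis by (simp add: on_cubic_cone_def)
next
  case False
  with assms(2) have "pg_point v \<in> twisted_cubic" by (auto simp: twisted_cubic_iff)
  with assms(1) have "proj_map A (pg_point v) \<in> twisted_cubic" by (auto simp: Gq_def)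
  then obtain w where "on_cubic_cone w" "pg_point (A *v v) = pg_point w"
    by (auto simp: twisted_cubic_iff proj_map_pg_point)
  moreover obtain c where "A *v v = c *s w"
    using pg_point_eq_imp_smult[OF \<open>pg_point (A *v v) = pg_point w\<close>[symmetric]] by blast
  ultimately show ?thesis by (metis on_cubic_cone_iff vector_smult_assoc)
qed

definition cubic_matrix :: "'a::field \<Rightarrow> 'a \<Rightarrow> 'a \<Rightarrow> 'a \<Rightarrow> 'a^4^4" where
  "cubic_matrix a b c d = vector [
     vector [a^3, 3*a^2*b, 3*a*b^2, b^3],
     vector [a^2*c, a^2*d + 2*a*b*c, 2*a*b*d + b^2*c, b^2*d],
     vector [a*c^2, 2*a*c*d + b*c^2, a*d^2 + 2*b*c*d, b*d^2],
     vector [c^3, 3*c^2*d, 3*c*d^2, d^3]]"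

lemma cubic_matrix_mult_vec:
  "cubic_matrix a b c d *v v = vector [
     a^3 * v$1 + 3*a^2*b * v$2 + 3*a*b^2 * v$3 + b^3 * v$4,
     a^2*c * v$1 + (a^2*d + 2*a*b*c) * v$2 + (2*a*b*d + b^2*c) * v$3 + b^2*d * v$4,
     a*c^2 * v$1 + (2*a*c*d + b*c^2) * v$2 + (a*d^2 + 2*b*c*d) * v$3 + b*d^2 * v$4,
     c^3 * v$1 + 3*c^2*d * v$2 + 3*c*d^2 * v$3 + d^3 * v$4]"
  by (simp add: matrix_vector_mult_4 cubic_matrix_def)

lemma cubic_matrix_cubic_vec:
  "cubic_matrix a b c d *v cubic_vec x y = cubic_vec (a*x + b*y) (c*x + d*y)"
  by (simp add: cubic_matrix_mult_vec cubic_vec_def vec_eq_iff_4 algebra_simps power2_eq_square power3_eq_cube)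

lemma cubic_matrix_comp:
  "cubic_matrix a b c d *v (cubic_matrix e f g h *v v) =
     cubic_matrix (a*e + b*g) (a*f + b*h) (c*e + d*g) (c*f + d*h) *v v"
  by (simp add: cubic_matrix_mult_vec vec_eq_iff_4 algebra_simps power2_eq_square power3_eq_cube)

lemma cubic_matrix_id: "cubic_matrix 1 0 0 1 = mat 1"
  by (simp add: cubic_matrix_def vec_eq_iff forall_4 mat_def)

lemma cubic_matrix_inverse:
  assumes "D = a * d - b * c" "D \<noteq> 0"
  shows "cubic_matrix a b c d *v (cubic_matrix (d/D) (-b/D) (-c/D) (a/D) *v v) = v"
proof -
  have "a * (d/D) + b * (-c/D) = 1" "a * (-b/D) + b * (a/D) = 0"
    "c * (d/D) + d * (-c/D) = 0" "c * (-b/D) + d * (a/D) = 1"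
    using assms(2) by (simp_all add: field_simps) (simp_all add: assms(1))
  then show ?thesis by (simp only: cubic_matrix_comp cubic_matrix_id matrix_vector_mul_lid)
qed

lemma cubic_matrix_preserves_cubic_cone:
  "on_cubic_cone v \<Longrightarrow> on_cubic_cone (cubic_matrix a b c d *v v)"
  by (metis on_cubic_cone_iff vector_scalar_commute cubic_matrix_cubic_vec)

section \<open>Elements of G_q are induced by PGL(2,q)\<close>

lemma poly_eq_0_if_degree_less_card:
  fixes p :: "'a::{finite,field} poly"
  assumes "degree p < CARD('a)" "\<And>x. poly p x = 0"
  shows "p = 0"
proof (rule ccontr)
  assume "p \<noteq> 0"
  then have "card {x. poly p x = 0} \<le> degree p" by (rule card_poly_roots_bound)
  with assms show False by simp
qed

lemma sextic_identity_coeffs_eq_0: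
  fixes c0 c1 c2 c3 c4 c5 c6 :: "'a::{finite,field}"
  assumes "CARD('a) \<ge> 7" and "\<And>t. c0 + c1*t + c2*t^2 + c3*t^3 + c4*t^4 + c5*t^5 + c6*t^6 = 0"
  shows "c0 = 0 \<and> c1 = 0 \<and> c2 = 0 \<and> c3 = 0 \<and> c4 = 0 \<and> c5 = 0 \<and> c6 = 0"
proof -
  have "degree [:c0, c1, c2, c3, c4, c5, c6:] \<le> 6"
    by (rule le_trans[OF degree_pCons_le], simp)+
  moreover have "poly [:c0, c1, c2, c3, c4, c5, c6:] t = 0" for t
    using assms(2)[of t] by (simp add: algebra_simps eval_nat_numeral)
  ultimately have "[:c0, c1, c2, c3, c4, c5, c6:] = 0"
    using assms(1) by (intro poly_eq_0_if_degree_less_card) auto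
  then show ?thesis by simp
qed

lemma cone_curve_coeffs:
  fixes \<alpha> \<delta> :: "'a::{finite,field}"
  assumes card: "CARD('a) \<ge> 7" and "\<alpha> \<noteq> 0" "\<delta> \<noteq> 0"
    and cone: "\<And>t. on_cubic_cone (vector [\<alpha>*t^3 + n12*t^2 + n13*t, n22*t^2 + n23*t,
                                          n32*t^2 + n33*t, n42*t^2 + n43*t + \<delta>])"
  shows "n12 = 0 \<and> n13 = 0 \<and> n23 = 0 \<and> n32 = 0 \<and> n42 = 0 \<and> n43 = 0 \<and>
    (\<exists>k. n33 = \<delta> * k \<and> n22 = \<delta> * k^2 \<and> \<alpha> = \<delta> * k^3)"
proof -
  \<comment> \<open>The three quadrics, evaluated along the curve, as polynomials in \<open>t\<close>.\<close>
  have "0 + 0*t + (n23^2 - n13*n33)*t^2 + (2*n22*n23 - n12*n33 - n13*n32)*t^3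
      + (n22^2 - \<alpha>*n33 - n12*n32)*t^4 + (- \<alpha>*n32)*t^5 + 0*t^6 = 0"
    "0 + (- n23*\<delta>)*t + (n33^2 - n22*\<delta> - n23*n43)*t^2 + (2*n32*n33 - n22*n43 - n23*n42)*t^3
      + (n32^2 - n22*n42)*t^4 + 0*t^5 + 0*t^6 = 0"
    "0 + (n13*\<delta>)*t + (n12*\<delta> + n13*n43 - n23*n33)*t^2
      + (\<alpha>*\<delta> + n12*n43 + n13*n42 - n22*n33 - n23*n32)*t^3
      + (\<alpha>*n43 + n12*n42 - n22*n32)*t^4 + (\<alpha>*n42)*t^5 + 0*t^6 = 0" for t
    using cone[of t] unfolding on_cubic_cone_def vector_4 by algebra+
  note Q1 = sextic_identity_coeffs_eq_0[OF card this(1)]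
    and Q2 = sextic_identity_coeffs_eq_0[OF card this(2)]
    and Q3 = sextic_identity_coeffs_eq_0[OF card this(3)]
  from Q1 Q2 Q3 \<open>\<alpha> \<noteq> 0\<close> \<open>\<delta> \<noteq> 0\<close> have zero: "n23 = 0" "n13 = 0" "n32 = 0" "n42 = 0"
    by simp_all
  with Q3 \<open>\<delta> \<noteq> 0\<close> have "n12 = 0" by simp
  with zero Q3 \<open>\<alpha> \<noteq> 0\<close> have "n43 = 0" by simp
  from zero \<open>n12 = 0\<close> \<open>n43 = 0\<close> Q1 Q2 Q3
  have "n33^2 = n22*\<delta>" "\<alpha>*\<delta> = n22*n33" by simp_all
  define k where "k = n33 / \<delta>"
  have "n33 = \<delta> * k" using \<open>\<delta> \<noteq> 0\<close> by (simp add: k_def)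
  moreover from calculation \<open>n33^2 = n22*\<delta>\<close> \<open>\<delta> \<noteq> 0\<close> have "n22 = \<delta> * k^2"
    by (simp add: power2_eq_square ac_simps)
  moreover from calculation \<open>\<alpha>*\<delta> = n22*n33\<close> \<open>\<delta> \<noteq> 0\<close> have "\<alpha> = \<delta> * k^3"
    by (simp add: power2_eq_square power3_eq_cube ac_simps)
  ultimately have "n33 = \<delta> * k \<and> n22 = \<delta> * k^2 \<and> \<alpha> = \<delta> * k^3" by blast
  with zero \<open>n12 = 0\<close> \<open>n43 = 0\<close> show ?thesis by blast
qed

lemma cone_preserving_fixing_ends:
  fixes N :: "'a::{finite,field}^4^4"
  assumes card: "CARD('a) \<ge> 7"
    and ends: "N *v cubic_vec 1 0 = \<alpha> *s cubic_vec 1 0" "N *v cubic_vec 0 1 = \<delta> *s cubic_vec 0 1"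
    and "\<alpha> \<noteq> 0" "\<delta> \<noteq> 0"
    and cone: "\<And>t. on_cubic_cone (N *v cubic_vec t 1)"
  shows "\<exists>k. k \<noteq> 0 \<and> (\<forall>v. N *v v = \<delta> *s (cubic_matrix k 0 0 1 *v v))"
proof -
  from ends have col1: "N$1$1 = \<alpha>" "N$2$1 = 0" "N$3$1 = 0" "N$4$1 = 0"
    and col4: "N$1$4 = 0" "N$2$4 = 0" "N$3$4 = 0" "N$4$4 = \<delta>"
    by (simp_all add: matrix_vector_mult_4 cubic_vec_def vec_eq_iff_4)
  have "N *v cubic_vec t 1 = vector [\<alpha>*t^3 + N$1$2*t^2 + N$1$3*t, N$2$2*t^2 + N$2$3*t,
      N$3$2*t^2 + N$3$3*t, N$4$2*t^2 + N$4$3*t + \<delta>]" for t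
    by (simp add: matrix_vector_mult_4 cubic_vec_def col1 col4 ac_simps)
  with cone cone_curve_coeffs[OF card \<open>\<alpha> \<noteq> 0\<close> \<open>\<delta> \<noteq> 0\<close>]
  obtain k where "N$1$2 = 0" "N$1$3 = 0" "N$2$3 = 0" "N$3$2 = 0" "N$4$2 = 0" "N$4$3 = 0"
    "N$3$3 = \<delta> * k" "N$2$2 = \<delta> * k^2" "\<alpha> = \<delta> * k^3"
    by metis
  with col1 col4 have "N *v v = \<delta> *s (cubic_matrix k 0 0 1 *v v)" for v
    by (simp add: matrix_vector_mult_4[of N] cubic_matrix_mult_vec vec_eq_iff_4 algebra_simps)
  moreover from \<open>\<alpha> = \<delta> * k^3\<close> \<open>\<alpha> \<noteq> 0\<close> have "k \<noteq> 0" by auto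
  ultimately show ?thesis by blast
qed

lemma cubic_vec_proportional:
  assumes "x * y' = x' * y" "x \<noteq> 0 \<or> y \<noteq> 0"
  shows "\<exists>k. cubic_vec x' y' = k *s cubic_vec x y"
proof (cases "x = 0")
  case True
  with assms have "x' = 0" "y \<noteq> 0" by auto
  with True show ?thesis
    by (intro exI[of _ "(y'/y)^3"]) (simp add: cubic_vec_def vec_eq_iff_4 field_simps)
next
  case False
  with assms(1) have y': "y' = x' * y / x" by (simp add: field_simps)
  show ?thesis
    by (intro exI[of _ "(x'/x)^3"])
      (simp add: False y' cubic_vec_def vec_eq_iff_4 field_simps power2_eq_square power3_eq_cube)
qed

lemma invertible_mult_vec_eq_0_iff:
  assumes "invertible (A :: 'a::field^'n^'n)" shows "A *v v = 0 \<longleftrightarrow> v = 0"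
  using assms matrix_left_invertible_ker unfolding invertible_def by auto

lemma invertible_cubic_vec_images_independent:
  assumes "invertible A"
    and "A *v cubic_vec 1 0 = \<alpha> *s cubic_vec x y" "A *v cubic_vec 0 1 = \<delta> *s cubic_vec x' y'"
  shows "x * y' - x' * y \<noteq> 0"
proof
  assume "x * y' - x' * y = 0"
  from assms(1,2) have "\<alpha> \<noteq> 0" "x \<noteq> 0 \<or> y \<noteq> 0"
    by (metis invertible_mult_vec_eq_0_iff cubic_vec_eq_0_iff vector_smult_lzero
        vector_smult_rzero zero_neq_one)+
  with \<open>x * y' - x' * y = 0\<close> obtain k where "cubic_vec x' y' = k *s cubic_vec x y"
    using cubic_vec_proportional by (metis eq_iff_diff_eq_0)
  with assms(2,3) \<open>\<alpha> \<noteq> 0\<close>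
  have "A *v (cubic_vec 0 1 - (\<delta> * k / \<alpha>) *s cubic_vec 1 0) = 0"
    by (simp add: matrix_vector_mult_diff_distrib vector_scalar_commute vector_smult_assoc)
  with assms(1) have "cubic_vec 0 1 = (\<delta> * k / \<alpha>) *s (cubic_vec 1 0 :: 'a^4)"
    by (simp add: invertible_mult_vec_eq_0_iff)
  then show False by (simp add: cubic_vec_def vec_eq_iff_4)
qed

lemma Gq_imp_cubic_matrix:
  fixes A :: "'a::{finite,field}^4^4"
  assumes G: "A \<in> Gq" and card: "CARD('a) \<ge> 7"
  shows "\<exists>a b c d l. l \<noteq> 0 \<and> a * d - b * c \<noteq> 0 \<and> (\<forall>v. A *v v = l *s (cubic_matrix a b c d *v v))"
proof -
  have inv: "invertible A" using G by (simp add: Gq_def)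
  have "on_cubic_cone (A *v cubic_vec x y)" for x y
    using Gq_preserves_cubic_cone[OF G] on_cubic_cone_iff by (metis vector_smult_lid)
  then obtain \<alpha> x y \<delta> x' y' where
    ends: "A *v cubic_vec 1 0 = \<alpha> *s cubic_vec x y" "A *v cubic_vec 0 1 = \<delta> *s cubic_vec x' y'"
    by (meson on_cubic_cone_iff)
  with inv have "\<alpha> \<noteq> 0" "\<delta> \<noteq> 0"
    by (metis invertible_mult_vec_eq_0_iff cubic_vec_eq_0_iff vector_smult_lzero zero_neq_one)+
  define D where "D = x * y' - x' * y"
  have "D \<noteq> 0" unfolding D_def by (rule invertible_cubic_vec_images_independent[OF inv ends])
  \<comment> \<open>\<open>N\<close> composes \<open>A\<close> with the inverse of \<open>cubic_matrix x x' y y'\<close>, so it fixes the points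
    \<open>P(1,0,0,0)\<close> and \<open>P(0,0,0,1)\<close>.\<close>
  define N where "N = cubic_matrix (y'/D) (-x'/D) (-y/D) (x/D) ** A"
  have A_eq: "A *v v = cubic_matrix x x' y y' *v (N *v v)" for v
    unfolding N_def matrix_vector_mul_assoc[symmetric]
    using cubic_matrix_inverse[OF D_def \<open>D \<noteq> 0\<close>] by simp
  have "y'/D * x + -x'/D * y = 1" "-y/D * x + x/D * y = 0"
    "y'/D * x' + -x'/D * y' = 0" "-y/D * x' + x/D * y' = 1"
    using \<open>D \<noteq> 0\<close> by (simp_all add: field_simps) (simp_all add: D_def)
  then have "N *v cubic_vec 1 0 = \<alpha> *s cubic_vec 1 0" "N *v cubic_vec 0 1 = \<delta> *s cubic_vec 0 1"
    unfolding N_def matrix_vector_mul_assoc[symmetric] ends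
    by (simp_all only: vector_scalar_commute cubic_matrix_cubic_vec)
  moreover have "on_cubic_cone (N *v cubic_vec t 1)" for t
    unfolding N_def matrix_vector_mul_assoc[symmetric]
    using Gq_preserves_cubic_cone[OF G] cubic_matrix_preserves_cubic_cone on_cubic_cone_iff
    by (metis vector_smult_lid)
  ultimately obtain k where "k \<noteq> 0" "\<forall>v. N *v v = \<delta> *s (cubic_matrix k 0 0 1 *v v)"
    using cone_preserving_fixing_ends[OF card _ _ \<open>\<alpha> \<noteq> 0\<close> \<open>\<delta> \<noteq> 0\<close>] by blast
  then have "A *v v = \<delta> *s (cubic_matrix (x * k) x' (y * k) y' *v v)" for v
    by (simp add: A_eq vector_scalar_commute cubic_matrix_comp)
  moreover have "(x * k) * y' - x' * (y * k) \<noteq> 0"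
    using \<open>D \<noteq> 0\<close> \<open>k \<noteq> 0\<close> by (simp add: D_def algebra_simps)
  ultimately show ?thesis using \<open>\<delta> \<noteq> 0\<close> by blast
qed

lemma same_orbit_imp_cubic_matrix:
  fixes L L' :: "('a::{finite,field}^4) set set"
  assumes "same_orbit L L'" "CARD('a) \<ge> 7"
  shows "\<exists>a b c d. a * d - b * c \<noteq> 0 \<and>
    (\<forall>z. pg_point z \<in> L \<longrightarrow> pg_point (cubic_matrix a b c d *v z) \<in> L')"
proof -
  from assms(1) obtain A where "A \<in> Gq" "proj_map A ` L = L'" by (auto simp: same_orbit_def)
  moreover obtain a b c d l where "l \<noteq> 0" "a * d - b * c \<noteq> 0"
    "\<forall>v. A *v v = l *s (cubic_matrix a b c d *v v)"
    using Gq_imp_cubic_matrix[OF \<open>A \<in> Gq\<close> assms(2)] by blast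
  ultimately show ?thesis
    by (metis image_eqI proj_map_pg_point pg_point_smult)
qed

section \<open>Characteristic two\<close>

lemma two_eq_0_if_even_card:
  assumes "even CARD('a::{finite,field})"
  shows "(2::'a) = 0"
proof -
  \<comment> \<open>Negation permutes the nonzero elements, which are odd in number; comparing the
    products of all of them gives \<open>(-1)^odd = 1\<close>.\<close>
  let ?U = "UNIV - {0::'a}"
  have "bij_betw (\<lambda>y. - y) ?U ?U"
    by (rule bij_betwI[where g = uminus]) auto
  then have "(\<Prod>y\<in>?U. - y) = (\<Prod>y\<in>?U. y)"
    using prod.reindex_bij_betw[of "\<lambda>y. - y" ?U ?U "\<lambda>y. y"] by simp
  moreover have "(\<Prod>y\<in>?U. - y) = (- 1) ^ card ?U * (\<Prod>y\<in>?U. y)"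
    by (simp add: prod_uminus)
  moreover have "(\<Prod>y\<in>?U. y) \<noteq> 0" by simp
  ultimately have "(- 1 :: 'a) ^ card ?U = 1" by simp
  moreover have "odd (card ?U)"
    using assms by (simp add: card_Diff_singleton)
  ultimately have "(- 1 :: 'a) = 1" by simp
  then show ?thesis by (metis add.right_inverse one_add_one)
qed

lemma char2_square_add:
  fixes x y :: "'a::comm_ring_1"
  assumes "(2::'a) = 0" shows "(x + y)^2 = x^2 + y^2"
  using assms by (simp add: power2_sum)

lemma char2_three_eq_one:
  assumes "(2::'a::comm_ring_1) = 0" shows "(3::'a) = 1"
proof -
  have "(3::'a) = 2 + 1" by simp
  with assms show ?thesis by simp
qed

lemma char2_add_eq_0_iff:
  fixes x y :: "'a::comm_ring_1"
  assumes "(2::'a) = 0" shows "x + y = 0 \<longleftrightarrow> x = y"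
proof -
  have "y + y = 0" using assms by (metis mult_2 mult_zero_left)
  then show ?thesis by (metis add_diff_cancel_right' diff_add_cancel diff_eq_eq)
qed

lemma char2_exists_sqrt:
  fixes x :: "'a::{finite,field}"
  assumes "(2::'a) = 0"
  shows "\<exists>p. x = p^2"
proof -
  have "inj (\<lambda>y::'a. y * y)"
  proof (rule injI)
    fix y z :: 'a assume "y * y = z * z"
    have "(y + z)^2 = y^2 + z^2" by (rule char2_square_add[OF assms])
    also have "\<dots> = 2 * (z * z)" using \<open>y * y = z * z\<close> by (simp add: power2_eq_square)
    finally have "(y + z)^2 = 0" using assms by simp
    then show "y = z" by (simp add: char2_add_eq_0_iff[OF assms])
  qed
  then have "surj (\<lambda>y::'a. y * y)" by (rule finite_UNIV_inj_surj[OF finite_class.finite_UNIV])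
  then obtain p where "x = p * p" by (metis surjD)
  then show ?thesis by (auto simp: power2_eq_square)
qed

text \<open>In characteristic 2, \<^term>\<open>frob_form u v s t z\<close> is the expression
  (u^2, v^2) Z (s, t)^T in the matrix Z of z.\<close>

definition frob_form :: "'a::field \<Rightarrow> 'a \<Rightarrow> 'a \<Rightarrow> 'a \<Rightarrow> 'a^4 \<Rightarrow> 'a" where
  "frob_form u v s t z = u^2 * (s * z$1 + t * z$2) + v^2 * (s * z$3 + t * z$4)"

lemma frob_form_rank_one:
  fixes x y :: "'a::field"
  assumes two: "(2::'a) = 0"
  shows "frob_form u v s t (vector [x^2*e, x^2*f, y^2*e, y^2*f]) = (u*x + v * y)^2 * (s * e + t * f)"
  unfolding frob_form_def vector_4 char2_square_add[OF two] power_mult_distrib by (simp add: algebra_simps)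

lemma frob_form_cubic_matrix:
  fixes a b c d :: "'a::field"
  assumes two: "(2::'a) = 0"
  shows "frob_form u v s t (cubic_matrix a b c d *v z) =
    frob_form (a*u + c * v) (b*u + d * v) (a * s + c * t) (b * s + d * t) z"
proof -
  have sq: "(a*u + c * v)^2 = a^2*u^2 + c^2 * v^2" "(b*u + d * v)^2 = b^2*u^2 + d^2 * v^2"
    by (simp_all add: char2_square_add[OF two] power_mult_distrib)
  show ?thesis
    unfolding frob_form_def cubic_matrix_mult_vec vector_4 sq two char2_three_eq_one[OF two]
    by (simp add: algebra_simps power3_eq_cube power2_eq_square)
qed

lemma ell_square_memD:
  fixes r :: "'a::field"
  assumes two: "(2::'a) = 0" and "pg_point z \<in> ell (r^2)"
  shows "frob_form 1 1 1 0 z = 0" "frob_form 1 r 0 1 z = 0"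
proof -
  obtain \<beta> \<gamma> where "pg_point z = pg_point (\<beta> *s vector [0, r^2, 0, 1] + \<gamma> *s vector [1, 0, 1, 0])"
    using assms(2) unfolding ell_def pg_line_def by blast
  then obtain k where "z = k *s (\<beta> *s vector [0, r^2, 0, 1] + \<gamma> *s vector [1, 0, 1, 0])"
    by (metis pg_point_eq_imp_smult)
  then have "z$1 = z$3" "z$2 = r^2 * z$4" by (simp_all add: algebra_simps)
  with two show "frob_form 1 1 1 0 z = 0" "frob_form 1 r 0 1 z = 0"
    by (simp_all add: frob_form_def char2_add_eq_0_iff)
qed

section \<open>Images of the lines ell and Lc\<close>

lemma sum_and_scaled_sum_eq_0:
  fixes x y k :: "'a::field"
  assumes "x + y = 0" "x + k * y = 0" "k \<noteq> 1"
  shows "x = 0 \<and> y = 0"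
proof -
  have "(k - 1) * y = (x + k * y) - (x + y)" by (simp add: algebra_simps)
  with assms show ?thesis by simp
qed

lemma ell_constraints_diagonal_or_antidiagonal:
  fixes a b c d p r :: "'a::field"
  assumes det: "a * d - b * c \<noteq> 0" and "p \<noteq> 1" "r \<noteq> 1"
    and A: "a = 0 \<or> (a + c) + (b + d) = 0" and C: "c = 0 \<or> (a + c * r) + (b + d * r) = 0"
    and B: "b = 0 \<or> (a + c) * p + (b + d) = 0" and D: "d = 0 \<or> (a + c * r) * p + (b + d * r) = 0"
  shows "(b = 0 \<and> c = 0) \<or> (a = 0 \<and> d = 0)"
proof -
  have "a = 0 \<or> c = 0"
  proof (rule ccontr)
    assume "\<not> (a = 0 \<or> c = 0)"
    with A C have "(a + b) + (c + d) = 0" "(a + b) + r * (c + d) = 0"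
      by (simp_all add: ac_simps distrib_left)
    then have "a + b = 0 \<and> c + d = 0" using \<open>r \<noteq> 1\<close> by (rule sum_and_scaled_sum_eq_0)
    moreover have "a * d - b * c = a * (c + d) - c * (a + b)" by (simp add: algebra_simps)
    ultimately show False using det by simp
  qed
  moreover have "b = 0 \<or> d = 0"
  proof (rule ccontr)
    assume "\<not> (b = 0 \<or> d = 0)"
    with B D have "(a * p + b) + (c * p + d) = 0" "(a * p + b) + r * (c * p + d) = 0"
      by (simp_all add: ac_simps distrib_left distrib_right)
    then have "a * p + b = 0 \<and> c * p + d = 0" using \<open>r \<noteq> 1\<close> by (rule sum_and_scaled_sum_eq_0)
    moreover have "a * d - b * c = a * (c * p + d) - c * (a * p + b)" by (simp add: algebra_simps)
    ultimately show False using det by simp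
  qed
  moreover have "a = 0 \<or> b = 0"
  proof (rule ccontr)
    assume "\<not> (a = 0 \<or> b = 0)"
    with A B have "(b + d) + (a + c) = 0" "(b + d) + p * (a + c) = 0"
      by (simp_all add: ac_simps)
    then have "b + d = 0 \<and> a + c = 0" using \<open>p \<noteq> 1\<close> by (rule sum_and_scaled_sum_eq_0)
    moreover have "a * d - b * c = a * (b + d) - b * (a + c)" by (simp add: algebra_simps)
    ultimately show False using det by simp
  qed
  moreover have "c = 0 \<or> d = 0"
  proof (rule ccontr)
    assume "\<not> (c = 0 \<or> d = 0)"
    with C D have "(b + d * r) + (a + c * r) = 0" "(b + d * r) + p * (a + c * r) = 0"
      by (simp_all add: ac_simps)
    then have "b + d * r = 0 \<and> a + c * r = 0" using \<open>p \<noteq> 1\<close> by (rule sum_and_scaled_sum_eq_0)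
    moreover have "a * d - b * c = d * (a + c * r) - c * (b + d * r)" by (simp add: algebra_simps)
    ultimately show False using det by simp
  qed
  ultimately show ?thesis using det by fastforce
qed

lemma ell_constraints_imp_eq:
  fixes a b c d p r :: "'a::field"
  assumes det: "a * d - b * c \<noteq> 0" and "p \<noteq> 1" "r \<noteq> 1"
    and A: "a = 0 \<or> (a + c) + (b + d) = 0" and C: "c = 0 \<or> (a + c * r) + (b + d * r) = 0"
    and B: "b = 0 \<or> (a + c) * p + (b + d) = 0" and D: "d = 0 \<or> (a + c * r) * p + (b + d * r) = 0"
  shows "p = r"
  using ell_constraints_diagonal_or_antidiagonal[OF assms]
proof (elim disjE conjE)
  assume "b = 0" "c = 0"
  with det A D have "d = - a" "a * p + d * r = 0" "a \<noteq> 0"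
    by (simp_all add: eq_neg_iff_add_eq_0 add.commute)
  then show ?thesis by (simp add: algebra_simps)
next
  assume "a = 0" "d = 0"
  with det B C have "b = - (c * p)" "c * r + b = 0" "c \<noteq> 0"
    by (simp_all add: eq_neg_iff_add_eq_0 add.commute)
  then show ?thesis by (simp add: algebra_simps)
qed

lemma Lc_constraints_False:
  fixes a b c d p :: "'a::field"
  assumes det: "a * d - b * c \<noteq> 0" and "p \<noteq> 1"
    and A: "a = 0 \<or> b + d = 0" and C: "c = 0 \<or> b + d * p = 0"
    and I: "(a + c)^2 * a + (b + d)^2 * b = 0"
  shows False
proof (cases "a = 0")
  case True
  with det have "b \<noteq> 0" "c \<noteq> 0" by auto
  with True I C have "b + d = 0" "b + p * d = 0" by (simp_all add: ac_simps)
  then have "b = 0 \<and> d = 0" using \<open>p \<noteq> 1\<close> by (rule sum_and_scaled_sum_eq_0)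
  with \<open>b \<noteq> 0\<close> show False by simp
next
  case False
  with A I have "b + d = 0" "a + c = 0" by auto
  have "c = 0"
  proof (rule ccontr)
    assume "c \<noteq> 0"
    with C have "b + p * d = 0" by (simp add: ac_simps)
    with \<open>b + d = 0\<close> have "b = 0 \<and> d = 0" using \<open>p \<noteq> 1\<close> by (rule sum_and_scaled_sum_eq_0)
    with det show False by simp
  qed
  with \<open>a + c = 0\<close> False show False by simp
qed

lemma cubic_matrix_maps_ell_imp_eq:
  fixes a b c d p r :: "'a::field"
  assumes two: "(2::'a) = 0" and det: "a * d - b * c \<noteq> 0" and "p \<noteq> 1" "r \<noteq> 1"
    and maps: "\<forall>z. pg_point z \<in> ell (p^2) \<longrightarrow> pg_point (cubic_matrix a b c d *v z) \<in> ell (r^2)"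
  shows "p = r"
proof -
  have on_ell: "pg_point (vector [0, p^2, 0, 1]) \<in> ell (p^2)" "pg_point (vector [1, 0, 1, 0]) \<in> ell (p^2)"
    unfolding ell_def by (intro pg_point_in_pg_line; simp add: vec_eq_iff_4)+
  have rank_one: "frob_form u v s t (vector [0, p^2, 0, 1]) = (u * p + v)^2 * t"
    "frob_form u v s t (vector [1, 0, 1, 0]) = (u + v)^2 * s" for u v s t
    using frob_form_rank_one[OF two, where x = p and e = 0 and f = 1 and y = 1]
      frob_form_rank_one[OF two, where x = 1 and e = 1 and f = 0 and y = 1]
    by simp_all
  have "frob_form 1 1 1 0 (cubic_matrix a b c d *v z) = 0"
    "frob_form 1 r 0 1 (cubic_matrix a b c d *v z) = 0" if "pg_point z \<in> ell (p^2)" for z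
    using maps that ell_square_memD[OF two] by blast+
  from this[OF on_ell(1)] this[OF on_ell(2)] show ?thesis
    unfolding frob_form_cubic_matrix[OF two] rank_one
    by (intro ell_constraints_imp_eq[OF det \<open>p \<noteq> 1\<close> \<open>r \<noteq> 1\<close>]) (auto simp: ac_simps)
qed

lemma cubic_matrix_maps_Lc_not_ell:
  fixes a b c d p :: "'a::field"
  assumes two: "(2::'a) = 0" and det: "a * d - b * c \<noteq> 0" and "p \<noteq> 1"
  shows "\<not> (\<forall>z. pg_point z \<in> Lc \<longrightarrow> pg_point (cubic_matrix a b c d *v z) \<in> ell (p^2))"
proof
  assume maps: "\<forall>z. pg_point z \<in> Lc \<longrightarrow> pg_point (cubic_matrix a b c d *v z) \<in> ell (p^2)"
  have on_Lc: "pg_point (vector [0, 0, 1, 0]) \<in> Lc" "pg_point (vector [1, 0, 0, 1]) \<in> Lc"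
    unfolding Lc_def by (intro pg_point_in_pg_line; simp add: vec_eq_iff_4)+
  have rank_one: "frob_form u v s t (vector [0, 0, 1, 0]) = v^2 * s" for u v s t
    by (simp add: frob_form_def)
  have "frob_form 1 1 1 0 (cubic_matrix a b c d *v z) = 0"
    "frob_form 1 p 0 1 (cubic_matrix a b c d *v z) = 0" if "pg_point z \<in> Lc" for z
    using maps that ell_square_memD[OF two] by blast+
  from this[OF on_Lc(1)] this(1)[OF on_Lc(2)] show False
    unfolding frob_form_cubic_matrix[OF two] rank_one
    by (intro Lc_constraints_False[OF det \<open>p \<noteq> 1\<close>]) (auto simp: frob_form_def ac_simps)
qed

theorem theorem5p3:
  assumes "even CARD('a)" and "CARD('a) \<ge> 8"
  shows "(\<forall>(\<mu>'::'a::{finite,field}) \<mu>''. \<mu>' \<notin> {0, 1} \<and> \<mu>'' \<notin> {0, 1} \<and> \<mu>' \<noteq> \<mu>''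
            \<longrightarrow> \<not> same_orbit (ell \<mu>') (ell (\<mu>'' :: 'a)))
       \<and> (\<forall>\<mu>. \<mu> \<notin> {0, 1} \<longrightarrow> \<not> same_orbit (Lc :: ('a ^ 4) set set) (ell \<mu>))"
proof -
  have two: "(2::'a) = 0" using assms(1) by (rule two_eq_0_if_even_card)
  have card: "CARD('a) \<ge> 7" using assms(2) by simp
  have sqrt: "\<exists>p. \<mu> = p^2 \<and> p \<noteq> 1" if "\<mu> \<noteq> 1" for \<mu> :: 'a
    using char2_exists_sqrt[OF two, of \<mu>] that by auto
  show ?thesis
  proof (intro conjI allI impI notI)
    fix \<mu>' \<mu>'' :: 'a
    assume "\<mu>' \<notin> {0, 1} \<and> \<mu>'' \<notin> {0, 1} \<and> \<mu>' \<noteq> \<mu>''" "same_orbit (ell \<mu>') (ell \<mu>'')"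
    moreover obtain p r where "\<mu>' = p^2" "\<mu>'' = r^2" "p \<noteq> 1" "r \<noteq> 1"
      using sqrt calculation(1) by (metis insert_iff)
    ultimately show False
      using same_orbit_imp_cubic_matrix[OF _ card] cubic_matrix_maps_ell_imp_eq[OF two] by metis
  next
    fix \<mu> :: 'a
    assume "\<mu> \<notin> {0, 1}" "same_orbit Lc (ell \<mu>)"
    moreover obtain p where "\<mu> = p^2" "p \<noteq> 1"
      using sqrt calculation(1) by (metis insert_iff)
    ultimately show False
      using same_orbit_imp_cubic_matrix[OF _ card] cubic_matrix_maps_Lc_not_ell[OF two] by metis
  qed
qed

end
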